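(* Let $\varphi:\mathcal X\to\mathbb C^N$ be a feature map, $H$ a Hermitian $N\times N$ matrix, and $g(x)=\varphi(x)^*H\varphi(x)$. Then for every $Q\in\mathcal P(\mathcal X)$, \[L^{\mathrm{OPT}}_g(Q)=\sup_{\tilde Q\in\mathcal P(\mathcal X):\ \Sigma_{\tilde Q}=\Sigma_Q}L_g(\tilde Q).\]
   Context: $\mathcal X=[0,1]^d$; $\mathcal P(\mathcal X)$ is the set of probability measures on $\mathcal X$; $\varphi$ is assumed such that the integrals below exist (e.g. bounded measurable). For $Q\in\mathcal P(\mathcal X)$, $L_g(Q)=\log\int_{\mathcal X}e^{g(x)}\,dQ(x)$ and $\Sigma_Q=\int_{\mathcal X}\varphi(x)\varphi(x)^*\,dQ(x)$. With $D_{\mathrm{KL}}(P\|Q)=\int\log(dP/dQ)\,dP$, define $D^{\mathrm{OPT}}_{\mathrm{KL}}(\Sigma_P\|\Sigma_Q)=\inf\{D_{\mathrm{KL}}(\tilde P\|\tilde Q):\tilde P,\tilde Q\in\mathcal P(\mathcal X),\ \Sigma_{\tilde P}=\Sigma_P,\ \Sigma_{\tilde Q}=\Sigma_Q\}$ and $L^{\mathrm{OPT}}_g(Q)=\sup_{P\in\mathcal P(\mathcal X)}\big(\int_{\mathcal X}g\,dP-D^{\mathrm{OPT}}_{\mathrm{KL}}(\Sigma_P\|\Sigma_Q)\big)$. *)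

theory Defs
  imports "HOL-Probability.Probability"
begin

text \<open>The domain X = [0,1]^d, with d given by the finite index type 'd.\<close>
definition cube :: "(real^'d) set" where
  "cube = {x. \<forall>i. 0 \<le> x $ i \<and> x $ i \<le> 1}"

definition cube_space :: "(real^'d) measure" where
  "cube_space = restrict_space borel cube"

definition probs :: "(real^'d) measure set" where
  "probs = {M. sets M = sets cube_space \<and> prob_space M}"

text \<open>KL divergence D_KL(P||Q) = int log(dP/dQ) dP, +infinity if P is not
  absolutely continuous w.r.t. Q (or if the integral diverges to +infinity;
  the negative part is always P-integrable).\<close>
definition KL :: "'a measure \<Rightarrow> 'a measure \<Rightarrow> ereal" where
  "KL P Q =
     (if absolutely_continuous Q P \<and>
         integrable P (\<lambda>x. ln (enn2real (RN_deriv Q P x)))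
      then ereal (\<integral>x. ln (enn2real (RN_deriv Q P x)) \<partial>P)
      else \<infinity>)"

definition Sigma :: "('a \<Rightarrow> complex^'n) \<Rightarrow> 'a measure \<Rightarrow> complex^'n^'n" where
  "Sigma \<phi> Q = (\<chi> i j. \<integral>x. \<phi> x $ i * cnj (\<phi> x $ j) \<partial>Q)"

definition Lg :: "('a \<Rightarrow> real) \<Rightarrow> 'a measure \<Rightarrow> real" where
  "Lg g Q = ln (\<integral>x. exp (g x) \<partial>Q)"

definition KL_opt :: "(real^'d::finite \<Rightarrow> complex^'n::finite) \<Rightarrow> (real^'d) measure \<Rightarrow> (real^'d) measure \<Rightarrow> ereal" where
  "KL_opt \<phi> P Q = (INF PQ \<in> {(P', Q'). P' \<in> probs \<and> Q' \<in> probs \<and>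
       Sigma \<phi> P' = Sigma \<phi> P \<and> Sigma \<phi> Q' = Sigma \<phi> Q}. KL (fst PQ) (snd PQ))"

definition L_opt :: "(real^'d::finite \<Rightarrow> complex^'n::finite) \<Rightarrow> (real^'d \<Rightarrow> real) \<Rightarrow> (real^'d) measure \<Rightarrow> ereal" where
  "L_opt \<phi> g Q = (SUP P \<in> probs. ereal (\<integral>x. g x \<partial>P) - KL_opt \<phi> P Q)"

definition hermitian :: "complex^'n^'n \<Rightarrow> bool" where
  "hermitian H \<longleftrightarrow> (\<forall>i j. H $ i $ j = cnj (H $ j $ i))"

definition quad :: "complex^'n^'n \<Rightarrow> complex^'n \<Rightarrow> complex" where
  "quad H v = (\<Sum>i\<in>UNIV. \<Sum>j\<in>UNIV. cnj (v $ i) * H $ i $ j * v $ j)"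

end

(* By the Donsker-Varadhan formula, ln of the integral of e^g against Q' equals the supremum
   over P of (integral of g against P) - KL(P||Q'), and the supremum is attained at the Gibbs
   measure with density e^g / Z with respect to Q'.  Since g = phi^* H phi, the mean of g under P
   is Re tr(H Sigma_P), so it depends on P only through Sigma_P.  In L^OPT_g(Q) the mean of g under
   P can therefore be moved to the first component P' of any admissible pair (P', Q'), and the
   supremum over P of the infimum over the pairs collapses to the supremum over Q' with
   Sigma_Q' = Sigma_Q of the Donsker-Varadhan formula. *)

theory Submission
  imports Defs
begin

lemma space_cube_space: "space cube_space = cube"
  by (simp add: cube_space_def space_restrict_space)

lemma probsD:
  assumes "M \<in> probs"
  shows "prob_space M" "sets M = sets cube_space" "space M = cube"
  using assms sets_eq_imp_space_eq[of M cube_space]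
  by (auto simp: probs_def space_cube_space)

lemma measurable_probs:
  assumes "f \<in> measurable cube_space N" "M \<in> probs"
  shows "f \<in> measurable M N"
  using assms measurable_cong_sets[OF probsD(2)[OF assms(2)] refl] by blast

lemma bounded_continuous_image:
  fixes f :: "'a::heine_borel \<Rightarrow> 'b::metric_space"
  assumes "bounded S" "continuous_on UNIV f"
  shows "bounded (f ` S)"
proof -
  have "compact (f ` closure S)"
    using assms by (intro compact_continuous_image) (auto intro: continuous_on_subset)
  then show ?thesis
    by (rule bounded_subset[OF compact_imp_bounded]) (auto intro: closure_subset[THEN subsetD])
qed

lemma (in finite_measure) integrable_continuous_comp_bounded:
  fixes \<phi> :: "'a \<Rightarrow> 'b::heine_borel"
    and h :: "'b \<Rightarrow> 'c::{banach, second_countable_topology}"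
  assumes "\<phi> \<in> borel_measurable M" "bounded (\<phi> ` space M)" "continuous_on UNIV h"
  shows "integrable M (\<lambda>x. h (\<phi> x))"
proof -
  obtain B where "\<forall>y \<in> h ` \<phi> ` space M. norm y \<le> B"
    using bounded_continuous_image[OF assms(2,3)] unfolding bounded_iff by blast
  then show ?thesis
    using assms(1,3)
    by (intro integrable_const_bound[where B = B]) (auto intro: borel_measurable_continuous_on)
qed

lemma integrable_probs_continuous_comp:
  fixes \<phi> :: "real^'d \<Rightarrow> 'b::heine_borel"
    and h :: "'b \<Rightarrow> 'c::{banach, second_countable_topology}"
  assumes "\<phi> \<in> borel_measurable cube_space" "bounded (\<phi> ` cube)" "M \<in> probs"
    and "continuous_on UNIV h"
  shows "integrable M (\<lambda>x. h (\<phi> x))"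
proof -
  interpret prob_space M using probsD(1)[OF \<open>M \<in> probs\<close>] .
  show ?thesis
    using measurable_probs[OF assms(1,3)] assms(2,4) probsD(3)[OF \<open>M \<in> probs\<close>]
    by (intro integrable_continuous_comp_bounded) simp_all
qed

lemma continuous_on_quad: "continuous_on UNIV (quad H)"
  unfolding quad_def by (intro continuous_intros)

lemma integral_quad_Sigma:
  fixes \<phi> :: "'a \<Rightarrow> complex^'n::finite"
  assumes "\<And>i j. integrable M (\<lambda>x. \<phi> x $ i * cnj (\<phi> x $ j))"
  shows "(\<integral>x. quad H (\<phi> x) \<partial>M)
    = (\<Sum>i\<in>UNIV. \<Sum>j\<in>UNIV. H $ i $ j * Sigma \<phi> M $ j $ i)"
proof -
  have "quad H (\<phi> x) = (\<Sum>i\<in>UNIV. \<Sum>j\<in>UNIV. H $ i $ j * (\<phi> x $ j * cnj (\<phi> x $ i)))" for x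
    unfolding quad_def by (intro sum.cong refl) (simp add: algebra_simps)
  then show ?thesis
    using assms by (simp add: Sigma_def integral_sum)
qed

lemma integral_Re_quad_probs:
  fixes \<phi> :: "real^'d \<Rightarrow> complex^'n::finite"
  assumes "\<phi> \<in> borel_measurable cube_space" "bounded (\<phi> ` cube)" "M \<in> probs"
  shows "(\<integral>x. Re (quad H (\<phi> x)) \<partial>M)
    = Re (\<Sum>i\<in>UNIV. \<Sum>j\<in>UNIV. H $ i $ j * Sigma \<phi> M $ j $ i)"
proof -
  note integrable_comp = integrable_probs_continuous_comp[OF assms]
  have entry_cont: "continuous_on UNIV (\<lambda>v. v $ i * cnj (v $ j) :: complex)" for i j
    by (intro continuous_intros)
  show ?thesis
    unfolding integral_Re[OF integrable_comp[OF continuous_on_quad]]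
      integral_quad_Sigma[OF integrable_comp[OF entry_cont]] ..
qed

lemma (in prob_space) integral_exp_pos:
  fixes g :: "'a \<Rightarrow> real"
  assumes "integrable M (\<lambda>x. exp (g x))"
  shows "0 < (\<integral>x. exp (g x) \<partial>M)"
proof -
  have "(\<integral>x. exp (g x) \<partial>M) \<noteq> 0"
    using integral_nonneg_eq_0_iff_AE[OF assms] by simp
  moreover have "0 \<le> (\<integral>x. exp (g x) \<partial>M)"
    by simp
  ultimately show ?thesis
    by linarith
qed

lemma (in prob_space) integral_nonpos_if_integral_exp_le_1:
  fixes u :: "'a \<Rightarrow> real"
  assumes "integrable M u" "integrable M (\<lambda>x. exp (u x))" "(\<integral>x. exp (u x) \<partial>M) \<le> 1"
  shows "(\<integral>x. u x \<partial>M) \<le> 0"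
proof -
  have "(\<integral>x. u x \<partial>M) \<le> (\<integral>x. exp (u x) - 1 \<partial>M)"
  proof (rule integral_mono)
    show "integrable M (\<lambda>x. exp (u x) - 1)"
      using assms(2) by simp
    show "u x \<le> exp (u x) - 1" for x
      using exp_ge_add_one_self[of "u x"] by linarith
  qed fact
  also have "\<dots> = (\<integral>x. exp (u x) \<partial>M) - 1"
    using assms(2) by (simp add: prob_space)
  finally show ?thesis
    using assms(3) by simp
qed

lemma nn_integral_exp_diff_ln_RN_deriv_le:
  fixes g :: "'a \<Rightarrow> real"
  assumes "sigma_finite_measure Q" "sigma_finite_measure P"
    and "absolutely_continuous Q P" "sets P = sets Q" "g \<in> borel_measurable Q"
  shows "(\<integral>\<^sup>+x. exp (g x - ln (enn2real (RN_deriv Q P x))) \<partial>P)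
    \<le> (\<integral>\<^sup>+x. exp (g x) \<partial>Q)"
proof -
  interpret Q: sigma_finite_measure Q by fact
  have "(\<integral>\<^sup>+x. exp (g x - ln (enn2real (RN_deriv Q P x))) \<partial>P)
      = (\<integral>\<^sup>+x. RN_deriv Q P x * exp (g x - ln (enn2real (RN_deriv Q P x))) \<partial>Q)"
    using assms(3-5) by (intro Q.RN_deriv_nn_integral) auto
  also have "\<dots> \<le> (\<integral>\<^sup>+x. exp (g x) \<partial>Q)"
  proof (intro nn_integral_mono_AE, use Q.RN_deriv_finite[OF assms(2-4)] in eventually_elim)
    case (elim x)
    then obtain r where r: "RN_deriv Q P x = ennreal r" "0 \<le> r"
      by (cases "RN_deriv Q P x") auto
    \<comment> \<open>where the density vanishes, \<open>ln 0 = 0\<close> is junk, but the factor \<open>RN_deriv Q P x = 0\<close> annihilates it\<close>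
    show ?case
    proof (cases "r = 0")
      case False
      then have "r * exp (g x - ln r) = exp (g x)"
        using r(2) by (simp add: exp_diff)
      then show ?thesis
        using r by (simp add: ennreal_mult'[symmetric])
    qed (use r in simp)
  qed
  finally show ?thesis .
qed

theorem Donsker_Varadhan_le:
  assumes P: "prob_space P" and Q: "prob_space Q" and sets_eq: "sets P = sets Q"
    and g: "g \<in> borel_measurable Q" "integrable P g" "integrable Q (\<lambda>x. exp (g x))"
  shows "ereal (\<integral>x. g x \<partial>P) - KL P Q \<le> ereal (Lg g Q)"
proof (cases "absolutely_continuous Q P \<and> integrable P (\<lambda>x. ln (enn2real (RN_deriv Q P x)))")
  case True
  interpret P: prob_space P by fact
  interpret Q: prob_space Q by fact
  define Z where "Z = (\<integral>x. exp (g x) \<partial>Q)"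
  define u where "u x = g x - ln Z - ln (enn2real (RN_deriv Q P x))" for x
  have "0 < Z"
    unfolding Z_def using g(3) by (rule Q.integral_exp_pos)
  have u_meas: "u \<in> borel_measurable P"
    using g(1) unfolding u_def measurable_cong_sets[OF sets_eq refl] by measurable
  have "(\<integral>\<^sup>+x. exp (u x) \<partial>P) \<le> (\<integral>\<^sup>+x. exp (g x - ln Z) \<partial>Q)"
    unfolding u_def using True g(1) P Q sets_eq
    by (intro nn_integral_exp_diff_ln_RN_deriv_le) (auto simp: prob_space_imp_sigma_finite)
  also have "\<dots> = ennreal (\<integral>x. exp (g x) / Z \<partial>Q)"
    using g(1,3) \<open>0 < Z\<close>
    by (subst nn_integral_eq_integral[symmetric]) (auto simp: exp_diff intro!: AE_I2 divide_nonneg_pos)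
  also have "\<dots> = 1"
    using \<open>0 < Z\<close> by (simp add: Z_def)
  finally have nn_exp_u: "(\<integral>\<^sup>+x. exp (u x) \<partial>P) \<le> 1" .
  have int_exp_u: "integrable P (\<lambda>x. exp (u x))"
    using u_meas nn_exp_u by (intro integrableI_nonneg) (auto simp: order.strict_trans1)
  have "(\<integral>x. u x \<partial>P) \<le> 0"
  proof (rule P.integral_nonpos_if_integral_exp_le_1)
    show "integrable P u"
      unfolding u_def using True g(2) by auto
    show "(\<integral>x. exp (u x) \<partial>P) \<le> 1"
      using nn_exp_u nn_integral_eq_integral[OF int_exp_u] by simp
  qed fact
  then show ?thesis
    using True g(2) by (simp add: KL_def Lg_def Z_def u_def P.prob_space)
qed (auto simp: KL_def)

definition gibbs :: "('a \<Rightarrow> real) \<Rightarrow> 'a measure \<Rightarrow> 'a measure" where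
  "gibbs g Q = density Q (\<lambda>x. ennreal (exp (g x) / (\<integral>y. exp (g y) \<partial>Q)))"

lemma sets_gibbs [simp]: "sets (gibbs g Q) = sets Q"
  by (simp add: gibbs_def)

lemma measurable_gibbs_density:
  assumes [measurable]: "g \<in> borel_measurable Q"
  shows "(\<lambda>x. ennreal (exp (g x) / (\<integral>y. exp (g y) \<partial>Q))) \<in> borel_measurable Q"
  by (intro measurable_compose[OF _ measurable_ennreal] borel_measurable_divide borel_measurable_const)
    measurable

lemma absolutely_continuous_gibbs:
  "g \<in> borel_measurable Q \<Longrightarrow> absolutely_continuous Q (gibbs g Q)"
  unfolding gibbs_def by (intro absolutely_continuousI_density measurable_gibbs_density)

lemma prob_space_gibbs:
  assumes "prob_space Q" "g \<in> borel_measurable Q" "integrable Q (\<lambda>x. exp (g x))"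
  shows "prob_space (gibbs g Q)"
proof (rule prob_spaceI)
  interpret Q: prob_space Q by fact
  define Z where "Z = (\<integral>x. exp (g x) \<partial>Q)"
  have "0 < Z"
    unfolding Z_def using assms(3) by (rule Q.integral_exp_pos)
  have "emeasure (gibbs g Q) (space (gibbs g Q))
      = (\<integral>\<^sup>+x. ennreal (exp (g x) / Z) * indicator (space Q) x \<partial>Q)"
    unfolding gibbs_def space_density Z_def
    by (rule emeasure_density[OF measurable_gibbs_density[OF assms(2)]]) simp
  also have "\<dots> = (\<integral>\<^sup>+x. ennreal (exp (g x) / Z) \<partial>Q)"
    by (intro nn_integral_cong) simp
  also have "\<dots> = 1"
    using assms(2,3) \<open>0 < Z\<close>
    by (subst nn_integral_eq_integral) (auto intro!: AE_I2 divide_nonneg_pos simp: Z_def)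
  finally show "emeasure (gibbs g Q) (space (gibbs g Q)) = 1" .
qed

lemma AE_ln_RN_deriv_gibbs:
  assumes "prob_space Q" "g \<in> borel_measurable Q" "integrable Q (\<lambda>x. exp (g x))"
  shows "AE x in gibbs g Q.
           g x - ln (\<integral>y. exp (g y) \<partial>Q) = ln (enn2real (RN_deriv Q (gibbs g Q) x))"
proof (rule absolutely_continuous_AE[OF sets_gibbs absolutely_continuous_gibbs[OF assms(2)]])
  interpret Q: prob_space Q by fact
  define Z where "Z = (\<integral>x. exp (g x) \<partial>Q)"
  have "0 < Z"
    unfolding Z_def using assms(3) by (rule Q.integral_exp_pos)
  have "AE x in Q. ennreal (exp (g x) / Z) = RN_deriv Q (gibbs g Q) x"
    unfolding Z_def using Q.RN_deriv_unique[OF measurable_gibbs_density[OF assms(2)]]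
    by (simp add: gibbs_def)
  then show "AE x in Q. g x - ln Z = ln (enn2real (RN_deriv Q (gibbs g Q) x))"
  proof eventually_elim
    case (elim x)
    then have "enn2real (RN_deriv Q (gibbs g Q) x) = exp (g x) / Z"
      using \<open>0 < Z\<close> by (metis divide_nonneg_pos enn2real_ennreal exp_ge_zero)
    then show ?case
      using \<open>0 < Z\<close> by (simp add: ln_divide_pos)
  qed
qed

lemma KL_gibbs:
  assumes Q: "prob_space Q" and g: "g \<in> borel_measurable Q" "integrable Q (\<lambda>x. exp (g x))"
    and g_gibbs: "integrable (gibbs g Q) g"
  shows "KL (gibbs g Q) Q = ereal ((\<integral>x. g x \<partial>gibbs g Q) - Lg g Q)"
proof -
  interpret P: prob_space "gibbs g Q"
    using prob_space_gibbs[OF Q g] .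
  define Z where "Z = (\<integral>x. exp (g x) \<partial>Q)"
  have "RN_deriv Q (gibbs g Q) \<in> borel_measurable (gibbs g Q)"
    using borel_measurable_RN_deriv measurable_cong_sets[OF sets_gibbs refl] by blast
  then have ln_RN_meas:
    "(\<lambda>x. ln (enn2real (RN_deriv Q (gibbs g Q) x))) \<in> borel_measurable (gibbs g Q)"
    by measurable
  have "g \<in> borel_measurable (gibbs g Q)"
    using g(1) measurable_cong_sets[OF sets_gibbs refl] by blast
  then have g_diff_meas: "(\<lambda>x. g x - ln Z) \<in> borel_measurable (gibbs g Q)"
    by measurable
  note ln_RN = AE_ln_RN_deriv_gibbs[OF Q g, folded Z_def]
  note ln_RN_cong = integrable_cong_AE_imp[OF _ ln_RN_meas ln_RN]
    integral_cong_AE[OF g_diff_meas ln_RN_meas ln_RN]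
  have "integrable (gibbs g Q) (\<lambda>x. ln (enn2real (RN_deriv Q (gibbs g Q) x)))"
    using g_gibbs by (intro ln_RN_cong) simp
  moreover have "(\<integral>x. ln (enn2real (RN_deriv Q (gibbs g Q) x)) \<partial>gibbs g Q)
      = (\<integral>x. g x \<partial>gibbs g Q) - ln Z"
    using g_gibbs by (simp add: ln_RN_cong(2)[symmetric] P.prob_space)
  ultimately show ?thesis
    using absolutely_continuous_gibbs[OF g(1)] by (simp add: KL_def Lg_def Z_def)
qed

lemma L_opt_eq_SUP_Lg:
  fixes \<phi> :: "real^'d::finite \<Rightarrow> complex^'n::finite"
  assumes DV_le: "\<And>P Q. P \<in> probs \<Longrightarrow> Q \<in> probs \<Longrightarrow>
      ereal (\<integral>x. g x \<partial>P) - KL P Q \<le> ereal (Lg g Q)"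
    and DV_attained: "\<And>Q. Q \<in> probs \<Longrightarrow>
      \<exists>P\<in>probs. KL P Q = ereal ((\<integral>x. g x \<partial>P) - Lg g Q)"
    and integral_Sigma: "\<And>P P'. P \<in> probs \<Longrightarrow> P' \<in> probs \<Longrightarrow> Sigma \<phi> P' = Sigma \<phi> P \<Longrightarrow>
      (\<integral>x. g x \<partial>P') = (\<integral>x. g x \<partial>P)"
    and Q: "Q \<in> probs"
  shows "L_opt \<phi> g Q = (SUP Q' \<in> {Q' \<in> probs. Sigma \<phi> Q' = Sigma \<phi> Q}. ereal (Lg g Q'))"
    (is "_ = ?R")
proof (unfold L_opt_def, rule antisym)
  show "(SUP P\<in>probs. ereal (\<integral>x. g x \<partial>P) - KL_opt \<phi> P Q) \<le> ?R"
  proof (rule SUP_least)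
    fix P :: "(real^'d) measure"
    assume P: "P \<in> probs"
    let ?T = "{(P', Q'). P' \<in> probs \<and> Q' \<in> probs \<and>
      Sigma \<phi> P' = Sigma \<phi> P \<and> Sigma \<phi> Q' = Sigma \<phi> Q}"
    have "ereal (\<integral>x. g x \<partial>P) - KL_opt \<phi> P Q
        = (SUP PQ \<in> ?T. ereal (\<integral>x. g x \<partial>P) - KL (fst PQ) (snd PQ))"
      unfolding KL_opt_def using P Q by (intro SUP_ereal_minus_right[symmetric]) auto
    also have "\<dots> \<le> ?R"
    proof (rule SUP_least, clarify)
      fix P' Q'
      assume PQ': "P' \<in> probs" "Q' \<in> probs" "Sigma \<phi> P' = Sigma \<phi> P" "Sigma \<phi> Q' = Sigma \<phi> Q"
      have "ereal (\<integral>x. g x \<partial>P) - KL P' Q' = ereal (\<integral>x. g x \<partial>P') - KL P' Q'"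
        using integral_Sigma[OF P PQ'(1,3)] by simp
      also have "\<dots> \<le> ereal (Lg g Q')"
        using DV_le PQ'(1,2) .
      also have "\<dots> \<le> ?R"
        using PQ' by (intro SUP_upper) auto
      finally show "ereal (\<integral>x. g x \<partial>P) - KL (fst (P', Q')) (snd (P', Q')) \<le> ?R"
        by simp
    qed
    finally show "ereal (\<integral>x. g x \<partial>P) - KL_opt \<phi> P Q \<le> ?R" .
  qed
next
  show "?R \<le> (SUP P\<in>probs. ereal (\<integral>x. g x \<partial>P) - KL_opt \<phi> P Q)"
  proof (rule SUP_least, clarify)
    fix Q' assume Q': "Q' \<in> probs" "Sigma \<phi> Q' = Sigma \<phi> Q"
    obtain P where P: "P \<in> probs" and KL_P: "KL P Q' = ereal ((\<integral>x. g x \<partial>P) - Lg g Q')"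
      using DV_attained[OF Q'(1)] by blast
    have "KL_opt \<phi> P Q \<le> KL P Q'"
      unfolding KL_opt_def using P Q' by (intro INF_lower2[of "(P, Q')"]) auto
    then have "ereal (\<integral>x. g x \<partial>P) - KL P Q' \<le> ereal (\<integral>x. g x \<partial>P) - KL_opt \<phi> P Q"
      by (intro ereal_minus_mono) simp_all
    then have "ereal (Lg g Q') \<le> ereal (\<integral>x. g x \<partial>P) - KL_opt \<phi> P Q"
      using KL_P by simp
    also have "\<dots> \<le> (SUP P\<in>probs. ereal (\<integral>x. g x \<partial>P) - KL_opt \<phi> P Q)"
      using P by (rule SUP_upper)
    finally show "ereal (Lg g Q') \<le> \<dots>" .
  qed
qed

theorem lemma22:
  fixes \<phi> :: "real^'d::finite \<Rightarrow> complex^'n::finite"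
    and H :: "complex^'n^'n"
    and g :: "real^'d \<Rightarrow> real"
    and Q :: "(real^'d) measure"
  assumes phi_meas: "\<phi> \<in> borel_measurable cube_space"
    and phi_bdd: "bounded (\<phi> ` cube)"
    and herm: "hermitian H"
    and g_def: "\<And>x. g x = Re (quad H (\<phi> x))"
    and Q: "Q \<in> probs"
  shows "L_opt \<phi> g Q = (SUP Q' \<in> {Q' \<in> probs. Sigma \<phi> Q' = Sigma \<phi> Q}. ereal (Lg g Q'))"
proof -
  have g_eq: "g = (\<lambda>x. Re (quad H (\<phi> x)))"
    by (simp add: g_def fun_eq_iff)
  note integrable_comp = integrable_probs_continuous_comp[OF phi_meas phi_bdd]
  have cont: "continuous_on UNIV (\<lambda>v. Re (quad H v))"
    "continuous_on UNIV (\<lambda>v. exp (Re (quad H v)))"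
    by (intro continuous_intros continuous_on_quad)+
  have g_meas: "g \<in> borel_measurable M" if "M \<in> probs" for M
    unfolding g_eq
    by (rule borel_measurable_continuous_on[OF cont(1) measurable_probs[OF phi_meas that]])
  have g_int: "integrable M g" "integrable M (\<lambda>x. exp (g x))" if "M \<in> probs" for M
    unfolding g_eq by (rule integrable_comp[OF that cont(1)], rule integrable_comp[OF that cont(2)])
  have integral_Sigma: "(\<integral>x. g x \<partial>P') = (\<integral>x. g x \<partial>P)"
    if "P \<in> probs" "P' \<in> probs" "Sigma \<phi> P' = Sigma \<phi> P" for P P'
    using that unfolding g_eq by (simp add: integral_Re_quad_probs[OF phi_meas phi_bdd])
  have gibbs_probs: "gibbs g Q' \<in> probs" if "Q' \<in> probs" for Q'
    using that prob_space_gibbs[OF probsD(1) g_meas g_int(2)] by (simp add: probs_def)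
  show ?thesis
  proof (rule L_opt_eq_SUP_Lg[OF _ _ integral_Sigma Q])
    show "ereal (\<integral>x. g x \<partial>P) - KL P Q' \<le> ereal (Lg g Q')"
      if "P \<in> probs" "Q' \<in> probs" for P Q'
      using that probsD(1,2) by (intro Donsker_Varadhan_le g_meas g_int) auto
    show "\<exists>P\<in>probs. KL P Q' = ereal ((\<integral>x. g x \<partial>P) - Lg g Q')"
      if "Q' \<in> probs" for Q'
      using that gibbs_probs by (intro bexI[of _ "gibbs g Q'"] KL_gibbs probsD(1) g_meas g_int)
  qed
qed

end
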